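(* Consider Algorithm NCB run with inputs $k\ge2$ and $T$ on an instance with $\mu^*\ge\frac{32\sqrt{k\log k\log T}}{\sqrt T}$. On the event $G$, every arm $i$ that is pulled at least once in Phase II satisfies $$\mu_i\ge\mu^*-8\sqrt{\frac{\mu^*\log T}{T_i-1}},$$ where $T_i$ is the total number of times arm $i$ is pulled during the whole run.
   Context: Bandit setup: $k$ arms, arm $i$ a distribution on $[0,1]$ with mean $\mu_i$, $\mu^*:=\max_i\mu_i$. $\log$ is the natural logarithm. Canonical model: a $k\times T$ table $(Y_{i,s})$ of independent entries with $Y_{i,s}$ distributed as arm $i$; the $s$-th pull of arm $i$ yields $Y_{i,s}$. Let $\widehat\mu_{i,s}:=\frac1s\sum_{r=1}^sY_{i,r}$. Algorithm NCB (inputs $k,T$): $\widetilde T:=16\sqrt{\frac{kT\log T}{\log k}}$. Phase I: in each round $t\le\widetilde T$ pull a uniformly random arm. Phase II: in each round $\widetilde T<t\le T$ pull an arm maximizing $\mathrm{NCB}_i:=\widehat\mu_i+4\sqrt{\widehat\mu_i\log T/n_i}$, where $n_i$ is the number of pulls of $i$ before the round and $\widehat\mu_i$ its empirical mean (ties arbitrary). Events: $G_1$: every arm is pulled at least $\frac{\widetilde T}{2k}$ times in Phase I. $G_2$: for every arm $i$ with $\mu_i>\frac{6\sqrt{k\log k\log T}}{\sqrt T}$ and every integer $s$ with $\frac{\widetilde T}{2k}\le s\le T$, $|\mu_i-\widehat\mu_{i,s}|\le 3\sqrt{\frac{\mu_i\log T}{s}}$. $G_3$: for every arm $j$ with $\mu_j\le\frac{6\sqrt{k\log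 k\log T}}{\sqrt T}$ and every integer $s$ with $\frac{\widetilde T}{2k}\le s\le T$, $\widehat\mu_{j,s}\le \frac{9\sqrt{k\log k\log T}}{\sqrt T}$. $G:=G_1\cap G_2\cap G_3$. *)

theory Defs
  imports Complex_Main
begin

text \<open>Arms are 0,...,k-1; rounds are 1,...,T. A run of NCB is described by the
sequence a of pulled arms (a t = arm pulled in round t) together with the
canonical reward table Y (Y i s = reward of the s-th pull of arm i).\<close>

definition Ttilde :: "nat \<Rightarrow> nat \<Rightarrow> real" where
  "Ttilde k T = 16 * sqrt (real k * real T * ln (real T) / ln (real k))"

definition npulls :: "(nat \<Rightarrow> nat) \<Rightarrow> nat \<Rightarrow> nat \<Rightarrow> nat" where
  "npulls a i t = card {s \<in> {1..<t}. a s = i}"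

definition emp_mean :: "(nat \<Rightarrow> nat \<Rightarrow> real) \<Rightarrow> nat \<Rightarrow> nat \<Rightarrow> real" where
  "emp_mean Y i s = (\<Sum>r = 1..s. Y i r) / real s"

definition ncb_index :: "nat \<Rightarrow> (nat \<Rightarrow> nat \<Rightarrow> real) \<Rightarrow> (nat \<Rightarrow> nat) \<Rightarrow> nat \<Rightarrow> nat \<Rightarrow> real" where
  "ncb_index T Y a i t =
     (let n = npulls a i t; m = emp_mean Y i n in m + 4 * sqrt (m * ln (real T) / real n))"

text \<open>a is a possible trajectory of NCB: in Phase I (t \<le> Ttilde) any arm may be
drawn (uniform random choice), in Phase II an arm maximizing the NCB index is
pulled (ties arbitrary).\<close>
definition ncb_run :: "nat \<Rightarrow> nat \<Rightarrow> (nat \<Rightarrow> nat \<Rightarrow> real) \<Rightarrow> (nat \<Rightarrow> nat) \<Rightarrow> bool" where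
  "ncb_run k T Y a \<longleftrightarrow>
     (\<forall>t \<in> {1..T}. a t < k \<and>
        (real t > Ttilde k T \<longrightarrow> (\<forall>j < k. ncb_index T Y a j t \<le> ncb_index T Y a (a t) t)))"

definition event_G1 :: "nat \<Rightarrow> nat \<Rightarrow> (nat \<Rightarrow> nat) \<Rightarrow> bool" where
  "event_G1 k T a \<longleftrightarrow>
     (\<forall>i < k. real (card {t \<in> {1..T}. real t \<le> Ttilde k T \<and> a t = i}) \<ge> Ttilde k T / (2 * real k))"

definition event_G2 :: "nat \<Rightarrow> nat \<Rightarrow> (nat \<Rightarrow> real) \<Rightarrow> (nat \<Rightarrow> nat \<Rightarrow> real) \<Rightarrow> bool" where
  "event_G2 k T \<mu> Y \<longleftrightarrow>
     (\<forall>i < k. \<mu> i > 6 * sqrt (real k * ln (real k) * ln (real T)) / sqrt (real T) \<longrightarrow>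
        (\<forall>s::nat. Ttilde k T / (2 * real k) \<le> real s \<and> s \<le> T \<longrightarrow>
           \<bar>\<mu> i - emp_mean Y i s\<bar> \<le> 3 * sqrt (\<mu> i * ln (real T) / real s)))"

definition event_G3 :: "nat \<Rightarrow> nat \<Rightarrow> (nat \<Rightarrow> real) \<Rightarrow> (nat \<Rightarrow> nat \<Rightarrow> real) \<Rightarrow> bool" where
  "event_G3 k T \<mu> Y \<longleftrightarrow>
     (\<forall>j < k. \<mu> j \<le> 6 * sqrt (real k * ln (real k) * ln (real T)) / sqrt (real T) \<longrightarrow>
        (\<forall>s::nat. Ttilde k T / (2 * real k) \<le> real s \<and> s \<le> T \<longrightarrow>
           emp_mean Y j s \<le> 9 * sqrt (real k * ln (real k) * ln (real T)) / sqrt (real T)))"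

end

theory Submission
  imports Defs
begin

text \<open>Let \<open>c = \<surd>(k log k log T / T)\<close> and let \<open>t\<close> be the last round in which arm \<open>i\<close> is pulled,
so that \<open>i\<close> had \<open>T\<^sub>i - 1\<close> samples at time \<open>t\<close>. By \<open>G\<^sub>1\<close> every arm has at least
\<open>T\<tilde>/(2k)\<close> samples by then, which makes the confidence radius \<open>log T / n\<close> at most \<open>c/8\<close>.
By \<open>G\<^sub>2\<close> the index of a best arm is at least \<open>\<mu>\<^sup>*\<close>, and the index of \<open>i\<close> is at least that
of the best arm since \<open>i\<close> was chosen. If \<open>\<mu>\<^sub>i > 6c\<close>, \<open>G\<^sub>2\<close> bounds the empirical mean of \<open>i\<close>
from above and the resulting quadratic inequality in square roots of the means gives the
claim. If \<open>\<mu>\<^sub>i \<le> 6c\<close>, \<open>G\<^sub>3\<close> bounds the index of \<open>i\<close> by \<open>17c < \<mu>\<^sup>*\<close>, which is impossible.\<close>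

lemma mean_le_index_of_lower_confidence:
  fixes \<mu> m e :: real
  assumes "0 \<le> e" "256 * e \<le> \<mu>" "0 \<le> m" "\<mu> - 3 * sqrt (\<mu> * e) \<le> m"
  shows "\<mu> \<le> m + 4 * sqrt (m * e)"
proof -
  have "\<mu> * e \<le> \<mu> * (\<mu> / 256)" using assms by (intro mult_left_mono) auto
  then have "sqrt (\<mu> * e) \<le> sqrt ((\<mu> / 16)\<^sup>2)" by (simp add: power2_eq_square)
  also have "\<dots> = \<mu> / 16" using assms by simp
  finally have "sqrt (\<mu> * e) \<le> \<mu> / 16" .
  then have "sqrt ((3/4)\<^sup>2 * \<mu>) \<le> sqrt m" using assms by (intro real_sqrt_le_mono) (simp add: power2_eq_square)
  then have "3/4 * sqrt \<mu> \<le> sqrt m" by (simp add: real_sqrt_mult)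
  then have "3/4 * sqrt \<mu> * sqrt e \<le> sqrt m * sqrt e" by (rule mult_right_mono) (simp add: assms(1))
  then have "3 * sqrt (\<mu> * e) \<le> 4 * sqrt (m * e)" by (simp add: real_sqrt_mult)
  then show ?thesis using assms(4) by linarith
qed

lemma mean_lower_bound_of_index:
  fixes \<mu> \<nu> m e :: real
  assumes "0 \<le> e" "256 * e \<le> \<mu>" "0 \<le> \<nu>" "\<nu> \<le> \<mu>" "0 \<le> m"
    and "m \<le> \<nu> + 3 * sqrt (\<nu> * e)" and "\<mu> \<le> m + 4 * sqrt (m * e)"
  shows "\<mu> - 8 * sqrt (\<mu> * e) \<le> \<nu>"
proof -
  have "(sqrt \<nu> + 3/2 * sqrt e)\<^sup>2 = \<nu> + 3 * sqrt (\<nu> * e) + 9/4 * e"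
    using assms by (simp add: power2_eq_square algebra_simps real_sqrt_mult)
  then have "m \<le> (sqrt \<nu> + 3/2 * sqrt e)\<^sup>2" using assms by linarith
  then have "sqrt m \<le> sqrt \<nu> + 3/2 * sqrt e" using assms(1,3) by (simp add: real_le_lsqrt)
  then have "sqrt m * sqrt e \<le> (sqrt \<nu> + 3/2 * sqrt e) * sqrt e" by (rule mult_right_mono) (simp add: assms(1))
  then have "sqrt (m * e) \<le> sqrt (\<nu> * e) + 3/2 * e"
    using assms(1) by (simp add: real_sqrt_mult distrib_right mult.assoc)
  moreover have "sqrt (\<nu> * e) \<le> sqrt (\<mu> * e)"
    using assms by (intro real_sqrt_le_mono mult_right_mono)
  moreover have "16 * e \<le> sqrt (\<mu> * e)"
  proof -
    have "(256 * e) * e \<le> \<mu> * e" using assms by (intro mult_right_mono)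
    then have "(16 * e)\<^sup>2 \<le> \<mu> * e" by (simp add: power2_eq_square)
    then show ?thesis by (simp add: real_le_rsqrt)
  qed
  ultimately show ?thesis using assms by linarith
qed

lemma small_mean_index_bound:
  fixes m e c :: real
  assumes "0 \<le> m" "m \<le> 9 * c" "0 \<le> e" "e \<le> c / 8"
  shows "m + 4 * sqrt (m * e) \<le> 17 * c"
proof -
  have "m * e \<le> (9 * c) * (c / 8)" using assms by (intro mult_mono) auto
  also have "\<dots> \<le> (2 * c)\<^sup>2" by (simp add: power2_eq_square)
  finally have "sqrt (m * e) \<le> \<bar>2 * c\<bar>" by (metis real_sqrt_abs real_sqrt_le_mono)
  moreover have "0 \<le> c" using assms by linarith
  ultimately have "sqrt (m * e) \<le> 2 * c" by simp
  then show ?thesis using assms by linarith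
qed

definition ncb_scale :: "nat \<Rightarrow> nat \<Rightarrow> real" where
  "ncb_scale k T = sqrt (real k * ln (real k) * ln (real T)) / sqrt (real T)"

lemma ncb_scale_pos: "k \<ge> 2 \<Longrightarrow> T \<ge> 2 \<Longrightarrow> ncb_scale k T > 0"
  by (simp add: ncb_scale_def)

lemma Ttilde_mult_ncb_scale:
  assumes "k \<ge> 2" "T \<ge> 1"
  shows "Ttilde k T / (2 * real k) * ncb_scale k T = 8 * ln (real T)"
proof -
  define L where "L = ln (real T)"
  have "0 \<le> L" using assms by (simp add: L_def)
  have "real k * real T * L / ln (real k) * (real k * ln (real k) * L) = (real k * L)\<^sup>2 * real T"
    using assms by (simp add: field_simps power2_eq_square)
  then have "sqrt (real k * real T * L / ln (real k)) * sqrt (real k * ln (real k) * L)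
      = real k * L * sqrt (real T)"
    by (simp only: real_sqrt_mult[symmetric]) (use \<open>0 \<le> L\<close> in \<open>simp add: real_sqrt_mult\<close>)
  moreover have "Ttilde k T / (2 * real k) * ncb_scale k T
      = 8 / real k * (sqrt (real k * real T * L / ln (real k)) * sqrt (real k * ln (real k) * L))
        / sqrt (real T)"
    by (simp add: Ttilde_def ncb_scale_def L_def field_simps)
  ultimately show ?thesis using assms by (simp add: L_def)
qed

lemma ln_div_le_ncb_scale:
  assumes "k \<ge> 2" "T \<ge> 2" "Ttilde k T / (2 * real k) \<le> real s"
  shows "ln (real T) / real s \<le> ncb_scale k T / 8"
proof -
  have "Ttilde k T > 0" using assms by (simp add: Ttilde_def)
  then have q: "Ttilde k T / (2 * real k) > 0" using assms by simp
  then have "0 < real s" using assms by linarith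
  have "ln (real T) / real s \<le> ln (real T) / (Ttilde k T / (2 * real k))"
    using assms q mult_pos_pos[OF \<open>0 < real s\<close> q] by (intro divide_left_mono) auto
  also have "\<dots> = ncb_scale k T / 8"
    using Ttilde_mult_ncb_scale[of k T] assms q by (simp add: field_simps)
  finally show ?thesis .
qed

lemma npulls_le: "npulls a j t \<le> t - 1"
proof -
  have "npulls a j t \<le> card {1..<t}" unfolding npulls_def by (intro card_mono) auto
  then show ?thesis by simp
qed

lemma npulls_ge_exploration:
  assumes "event_G1 k T a" "j < k" "Ttilde k T < real t"
  shows "Ttilde k T / (2 * real k) \<le> real (npulls a j t)"
proof -
  have "{s \<in> {1..T}. real s \<le> Ttilde k T \<and> a s = j} \<subseteq> {s \<in> {1..<t}. a s = j}"
    using assms(3) by auto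
  then have "card {s \<in> {1..T}. real s \<le> Ttilde k T \<and> a s = j} \<le> npulls a j t"
    unfolding npulls_def by (intro card_mono) auto
  moreover have "Ttilde k T / (2 * real k) \<le> card {s \<in> {1..T}. real s \<le> Ttilde k T \<and> a s = j}"
    using assms(1,2) unfolding event_G1_def by blast
  ultimately show ?thesis by (meson of_nat_le_iff order_trans)
qed

lemma last_pull_exists:
  assumes "t\<^sub>0 \<in> {1..T}" "a t\<^sub>0 = i"
  obtains t where "t \<in> {1..T}" "a t = i" "t\<^sub>0 \<le> t" "npulls a i (T + 1) = Suc (npulls a i t)"
proof -
  define S where "S = {s \<in> {1..T}. a s = i}"
  have "finite S" "t\<^sub>0 \<in> S" using assms by (auto simp: S_def)
  define t where "t = Max S"
  have "t \<in> S" "t\<^sub>0 \<le> t"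
    using \<open>finite S\<close> \<open>t\<^sub>0 \<in> S\<close> Max_in[of S] by (auto simp: t_def simp del: Max_in)
  have "s \<le> t" if "s \<in> S" for s
    using \<open>finite S\<close> that by (simp add: t_def)
  then have "{s \<in> {1..<T + 1}. a s = i} = insert t {s \<in> {1..<t}. a s = i}"
    using \<open>t \<in> S\<close> unfolding S_def by (auto simp: less_Suc_eq_le order.strict_iff_order)
  then have "npulls a i (T + 1) = Suc (npulls a i t)" by (simp add: npulls_def)
  then show thesis using that \<open>t \<in> S\<close> \<open>t\<^sub>0 \<le> t\<close> by (auto simp: S_def)
qed

lemma emp_mean_nonneg:
  assumes "\<forall>s \<in> {1..T}. 0 \<le> Y j s" "s \<le> T"
  shows "0 \<le> emp_mean Y j s"
  unfolding emp_mean_def using assms by (intro divide_nonneg_nonneg sum_nonneg) auto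

text \<open>For \<open>T = 1\<close> both \<open>log T\<close> and \<open>T\<tilde>\<close> vanish, so \<open>G\<^sub>2\<close> applies to \<open>s = 0\<close>, where the empirical
mean and the radius are \<open>0\<close> by the convention \<open>x / 0 = 0\<close>.\<close>

lemma event_G2_horizon_one:
  assumes "event_G2 k 1 \<mu> Y" "j < k"
  shows "\<mu> j \<le> 0"
proof (rule ccontr)
  assume "\<not> \<mu> j \<le> 0"
  moreover have "Ttilde k 1 = 0" by (simp add: Ttilde_def)
  ultimately have "\<bar>\<mu> j - emp_mean Y j 0\<bar> \<le> 3 * sqrt (\<mu> j * ln 1 / real (0::nat))"
    using assms unfolding event_G2_def by fastforce
  then show False using \<open>\<not> \<mu> j \<le> 0\<close> by (simp add: emp_mean_def)
qed

lemma mean_le_index_on_G2: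
  assumes "k \<ge> 2" "T \<ge> 2" "event_G2 k T \<mu> Y" "j < k" "32 * ncb_scale k T \<le> \<mu> j"
    and "Ttilde k T / (2 * real k) \<le> real s" "s \<le> T" "\<forall>r \<in> {1..T}. 0 \<le> Y j r"
  shows "\<mu> j \<le> emp_mean Y j s + 4 * sqrt (emp_mean Y j s * ln (real T) / real s)"
proof -
  have "ncb_scale k T > 0" using assms by (simp add: ncb_scale_pos)
  then have "\<bar>\<mu> j - emp_mean Y j s\<bar> \<le> 3 * sqrt (\<mu> j * ln (real T) / real s)"
    using assms(3-7) unfolding event_G2_def by (simp add: ncb_scale_def)
  moreover have "ln (real T) / real s \<le> ncb_scale k T / 8"
    using assms by (intro ln_div_le_ncb_scale)
  ultimately show ?thesis
    using mean_le_index_of_lower_confidence[of "ln (real T) / real s" "\<mu> j" "emp_mean Y j s"]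
      emp_mean_nonneg[of T Y j s] assms by simp
qed

lemma index_le_on_G3:
  assumes "k \<ge> 2" "T \<ge> 2" "event_G3 k T \<mu> Y" "j < k" "\<mu> j \<le> 6 * ncb_scale k T"
    and "Ttilde k T / (2 * real k) \<le> real s" "s \<le> T" "\<forall>r \<in> {1..T}. 0 \<le> Y j r"
  shows "emp_mean Y j s + 4 * sqrt (emp_mean Y j s * ln (real T) / real s) \<le> 17 * ncb_scale k T"
proof -
  have "emp_mean Y j s \<le> 9 * ncb_scale k T"
    using assms(3-7) unfolding event_G3_def by (simp add: ncb_scale_def)
  moreover have "ln (real T) / real s \<le> ncb_scale k T / 8"
    using assms by (intro ln_div_le_ncb_scale)
  ultimately show ?thesis
    using small_mean_index_bound[of "emp_mean Y j s" "ncb_scale k T" "ln (real T) / real s"]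
      emp_mean_nonneg[of T Y j s] assms by simp
qed

lemma mean_lower_bound_on_G2:
  assumes "k \<ge> 2" "T \<ge> 2" "event_G2 k T \<mu> Y" "j < k" "6 * ncb_scale k T < \<mu> j"
    and "\<mu> j \<le> M" "32 * ncb_scale k T \<le> M"
    and "Ttilde k T / (2 * real k) \<le> real s" "s \<le> T" "\<forall>r \<in> {1..T}. 0 \<le> Y j r"
    and "M \<le> emp_mean Y j s + 4 * sqrt (emp_mean Y j s * ln (real T) / real s)"
  shows "M - 8 * sqrt (M * ln (real T) / real s) \<le> \<mu> j"
proof -
  have "ncb_scale k T > 0" using assms by (simp add: ncb_scale_pos)
  then have "\<mu> j \<ge> 0" using assms(5) by linarith
  have "\<bar>\<mu> j - emp_mean Y j s\<bar> \<le> 3 * sqrt (\<mu> j * ln (real T) / real s)"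
    using assms(3-5,8,9) unfolding event_G2_def by (simp add: ncb_scale_def)
  then have "emp_mean Y j s \<le> \<mu> j + 3 * sqrt (\<mu> j * ln (real T) / real s)" by linarith
  moreover have "ln (real T) / real s \<le> ncb_scale k T / 8"
    using assms by (intro ln_div_le_ncb_scale)
  ultimately show ?thesis
    using mean_lower_bound_of_index[of "ln (real T) / real s" M "\<mu> j" "emp_mean Y j s"]
      emp_mean_nonneg[of T Y j s] \<open>\<mu> j \<ge> 0\<close> assms by simp
qed

theorem lemma4:
  fixes k T :: nat and \<mu> :: "nat \<Rightarrow> real" and Y :: "nat \<Rightarrow> nat \<Rightarrow> real" and a :: "nat \<Rightarrow> nat"
  assumes k2: "k \<ge> 2"
    and mu_range: "\<forall>i < k. 0 \<le> \<mu> i \<and> \<mu> i \<le> 1"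
    and Y_range: "\<forall>i < k. \<forall>s \<in> {1..T}. 0 \<le> Y i s \<and> Y i s \<le> 1"
    and run: "ncb_run k T Y a"
    and big: "Max (\<mu> ` {..<k}) \<ge> 32 * sqrt (real k * ln (real k) * ln (real T)) / sqrt (real T)"
    and G1: "event_G1 k T a" and G2: "event_G2 k T \<mu> Y" and G3: "event_G3 k T \<mu> Y"
    and i: "i < k"
    and phase2: "\<exists>t \<in> {1..T}. real t > Ttilde k T \<and> a t = i"
  shows "\<mu> i \<ge> Max (\<mu> ` {..<k})
           - 8 * sqrt (Max (\<mu> ` {..<k}) * ln (real T) / (real (npulls a i (T + 1)) - 1))"
proof -
  define M where "M = Max (\<mu> ` {..<k})"
  have "\<mu> ` {..<k} \<noteq> {}" using k2 by (simp add: lessThan_empty_iff)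
  then have "M \<in> \<mu> ` {..<k}" unfolding M_def by (intro Max_in) auto
  then obtain b where best: "b < k" "\<mu> b = M" by auto
  have "\<mu> i \<le> M" using i by (simp add: M_def)
  obtain t\<^sub>0 where t\<^sub>0: "t\<^sub>0 \<in> {1..T}" "Ttilde k T < real t\<^sub>0" "a t\<^sub>0 = i" using phase2 by blast
  show ?thesis
  proof (cases "T = 1")
    case True
    then show ?thesis using event_G2_horizon_one[of k \<mu> Y] G2 best mu_range i by (fastforce simp: M_def)
  next
    case False
    then have "T \<ge> 2" using t\<^sub>0 by auto
    obtain t where t: "t \<in> {1..T}" "a t = i" "t\<^sub>0 \<le> t"
        and n: "npulls a i (T + 1) = Suc (npulls a i t)"
      using last_pull_exists[of t\<^sub>0 T a i] t\<^sub>0 by blast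
    have "Ttilde k T < real t" using t\<^sub>0(2) t(3) by linarith
    have pulls: "Ttilde k T / (2 * real k) \<le> real (npulls a j t)" "npulls a j t \<le> T"
      and Y_nonneg: "\<forall>r \<in> {1..T}. 0 \<le> Y j r" if "j < k" for j
      using npulls_ge_exploration[OF G1 that \<open>Ttilde k T < real t\<close>] npulls_le[of a j t] t(1)
        Y_range that by auto
    have "32 * ncb_scale k T \<le> M" using big by (simp add: M_def ncb_scale_def)
    have "M \<le> ncb_index T Y a b t"
      using mean_le_index_on_G2[OF k2 \<open>T \<ge> 2\<close> G2 best(1) _ pulls[OF best(1)] Y_nonneg[OF best(1)]]
        best \<open>32 * ncb_scale k T \<le> M\<close> by (simp add: ncb_index_def Let_def)
    also have "\<dots> \<le> ncb_index T Y a i t"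
      using run t \<open>Ttilde k T < real t\<close> best(1) unfolding ncb_run_def by auto
    finally have index: "M \<le> ncb_index T Y a i t" .
    show ?thesis
    proof (cases "6 * ncb_scale k T < \<mu> i")
      case True
      with index show ?thesis
        using mean_lower_bound_on_G2[OF k2 \<open>T \<ge> 2\<close> G2 i True \<open>\<mu> i \<le> M\<close>
            \<open>32 * ncb_scale k T \<le> M\<close> pulls[OF i] Y_nonneg[OF i]] n
        by (simp add: ncb_index_def Let_def M_def)
    next
      case False
      with index have "M \<le> 17 * ncb_scale k T"
        using index_le_on_G3[OF k2 \<open>T \<ge> 2\<close> G3 i _ pulls[OF i] Y_nonneg[OF i]]
        by (simp add: ncb_index_def Let_def)
      then show ?thesis
        using \<open>32 * ncb_scale k T \<le> M\<close> ncb_scale_pos[OF k2 \<open>T \<ge> 2\<close>] by linarith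
    qed
  qed
qed

end
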